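(* Let $n\ge 0$ be an integer. Then for every real $r$ with $|r|>1$, $$\int_{-1}^1 \frac{U_n(s)(1-s^2)^{\frac{3}{2}}}{(s-r)^3}\,ds = \frac{\pi}{2}\left[(n^2+2n+3)-3(n+1)\frac{|r|}{\sqrt{r^2-1}}\right]\left(r-\frac{|r|}{r}\sqrt{r^2-1}\right)^{n+1}.$$
   Context: $U_k(s)=\frac{\sin((k+1)\cos^{-1}s)}{\sin(\cos^{-1}s)}$ is the Tchebyshev polynomial of the second kind. Since $|r|>1$, the integral is an ordinary (nonsingular) integral. *)

theory Defs
  imports "HOL-Analysis.Analysis"
begin

text \<open>Chebyshev polynomial of the second kind, defined as in the paper:
  U_k(s) = sin((k+1) arccos s) / sin(arccos s).  (At s = 1 or s = -1 the
  quotient is 0/0, which Isabelle evaluates to 0; this is a null set.)\<close>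
definition chebU :: "nat \<Rightarrow> real \<Rightarrow> real" where
  "chebU k s = sin ((real k + 1) * arccos s) / sin (arccos s)"

end

theory Submission
  imports Defs
begin

(* Substituting s = cos t turns the integral into the integral over [0, pi] of
   sin((n+1) t) sin(t)^3 / (cos t - r)^3.  By the product-to-sum formula and
   sin(t)^2 = (1 - r^2) + 2 r u - u^2 with u = r - cos t, this is a combination of the integrals
   I_m(k) = integral over [0, pi] of cos(k t) / u^m for m = 1, 2, 3 and k = n, n + 2.
   Writing cos((k+2) t) = 2 cos t cos((k+1) t) - cos(k t) and cos t = r - u gives
   I_(m+1)(k+2) = 2 r I_(m+1)(k+1) - 2 I_m(k+1) - I_(m+1)(k), with I_0(k) = 0 for k > 0.
   Hence each I_m(k) is p^k times a polynomial in k, where p = r - q is the root of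
   x^2 - 2 r x + 1 in (-1, 1) and q = sgn(r) sqrt(r^2 - 1).  The starting values come from an
   explicit antiderivative of 1/u and from integrating the derivatives of sin t / u^j over [0, pi]. *)

(* chebU is 0/0 at s = 1 and s = -1; the polynomial form is continuous on [-1, 1], as the
   substitution s = cos t requires. *)
fun chebyshevU :: "nat \<Rightarrow> real \<Rightarrow> real" where
  "chebyshevU 0 s = 1"
| "chebyshevU (Suc 0) s = 2 * s"
| "chebyshevU (Suc (Suc n)) s = 2 * s * chebyshevU (Suc n) s - chebyshevU n s"

lemma chebyshevU_cos: "chebyshevU n (cos t) * sin t = sin ((real n + 1) * t)"
proof (induction n rule: induct_nat_012)
  case 0
  show ?case by simp
next
  case 1
  show ?case by (simp add: sin_double)
next
  case (ge2 n)
  have "sin ((real n + 3) * t) = 2 * cos t * sin ((real n + 2) * t) - sin ((real n + 1) * t)"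
    using sin_add[of "(real n + 2) * t" t] sin_diff[of "(real n + 2) * t" t]
    by (simp add: algebra_simps)
  with ge2 show ?case
    by (simp add: algebra_simps numeral_eq_Suc)
qed

lemma continuous_on_chebyshevU: "continuous_on S (chebyshevU n)"
  by (induction n rule: induct_nat_012) (auto intro!: continuous_intros)

lemma chebU_eq_chebyshevU:
  assumes "-1 < s" "s < 1"
  shows "chebU n s = chebyshevU n s"
proof -
  have "sin (arccos s) > 0"
    using arccos_lt_bounded[OF assms] by (simp add: sin_gt_zero)
  then show ?thesis
    using chebyshevU_cos[of n "arccos s"] assms unfolding chebU_def by (simp add: field_simps)
qed

lemma has_integral_real_FTC:
  fixes f f' :: "real \<Rightarrow> real"
  assumes "a \<le> b" and "\<And>x. (f has_real_derivative f' x) (at x)"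
  shows "(f' has_integral (f b - f a)) {a..b}"
  using assms(1) by (rule fundamental_theorem_of_calculus)
    (use assms(2) in \<open>auto simp: has_real_derivative_iff_has_vector_derivative[symmetric]
       intro: has_field_derivative_at_within\<close>)

lemma r_minus_cos_nonzero:
  fixes r t :: real
  assumes "\<bar>r\<bar> > 1"
  shows "r - cos t \<noteq> 0"
  using assms abs_cos_le_one[of t] by (cases "r = cos t") auto

lemma cos_divide_power:
  fixes r t :: real
  assumes "r - cos t \<noteq> 0"
  shows "cos t / (r - cos t) ^ (m + 1) = r / (r - cos t) ^ (m + 1) - 1 / (r - cos t) ^ m"
proof -
  have "(r - u) / u ^ Suc m = r / u ^ Suc m - 1 / u ^ m" if "u \<noteq> 0" for u :: real
    using that by (simp add: diff_divide_distrib)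
  from this[of "r - cos t"] assms show ?thesis by simp
qed

definition cos_quotient_integral :: "real \<Rightarrow> nat \<Rightarrow> nat \<Rightarrow> real" where
  "cos_quotient_integral r m k = integral {0..pi} (\<lambda>t. cos (real k * t) / (r - cos t) ^ m)"

lemma has_integral_cos_quotient_integral:
  assumes "\<bar>r\<bar> > 1"
  shows "((\<lambda>t. cos (real k * t) / (r - cos t) ^ m) has_integral cos_quotient_integral r m k) {0..pi}"
  unfolding cos_quotient_integral_def
  by (intro integrable_integral integrable_continuous_interval continuous_intros)
    (use r_minus_cos_nonzero[OF assms] in auto)

lemma cos_quotient_integral_0:
  "cos_quotient_integral r 0 k = (if k = 0 then pi else 0)"
proof (cases "k = 0")
  case False
  have "((\<lambda>t. cos (real k * t)) has_integral (sin (real k * pi) / real k - sin (real k * 0) / real k)) {0..pi}"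
    by (rule has_integral_real_FTC) (use False in \<open>auto intro!: derivative_eq_intros\<close>)
  then show ?thesis
    using False unfolding cos_quotient_integral_def by (simp add: integral_unique sin_npi mult.commute)
qed (simp add: cos_quotient_integral_def)

lemma cos_quotient_integral_at_1:
  assumes "\<bar>r\<bar> > 1"
  shows "cos_quotient_integral r (m + 1) 1 = r * cos_quotient_integral r (m + 1) 0 - cos_quotient_integral r m 0"
proof -
  have integrand: "cos (real 1 * t) / (r - cos t) ^ (m + 1)
      = r * (cos (real 0 * t) / (r - cos t) ^ (m + 1)) - cos (real 0 * t) / (r - cos t) ^ m" for t
    using cos_divide_power[OF r_minus_cos_nonzero[OF assms]] by simp
  show ?thesis
    unfolding cos_quotient_integral_def[of r "m + 1" 1] integrand
    by (intro integral_unique has_integral_diff has_integral_mult_right has_integral_cos_quotient_integral assms)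
qed

lemma cos_quotient_integral_recurrence:
  assumes "\<bar>r\<bar> > 1"
  shows "cos_quotient_integral r (m + 1) (Suc (Suc k))
    = 2 * r * cos_quotient_integral r (m + 1) (Suc k) - 2 * cos_quotient_integral r m (Suc k)
      - cos_quotient_integral r (m + 1) k"
proof -
  have integrand: "cos (real (Suc (Suc k)) * t) / (r - cos t) ^ (m + 1)
      = 2 * r * (cos (real (Suc k) * t) / (r - cos t) ^ (m + 1)) - 2 * (cos (real (Suc k) * t) / (r - cos t) ^ m)
        - cos (real k * t) / (r - cos t) ^ (m + 1)" for t
  proof -
    have "cos (real (Suc (Suc k)) * t) = 2 * cos t * cos (real (Suc k) * t) - cos (real k * t)"
      using cos_add[of "real (Suc k) * t" t] cos_diff[of "real (Suc k) * t" t]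
      by (simp add: algebra_simps)
    then have "cos (real (Suc (Suc k)) * t) / (r - cos t) ^ (m + 1)
      = 2 * cos (real (Suc k) * t) * (cos t / (r - cos t) ^ (m + 1)) - cos (real k * t) / (r - cos t) ^ (m + 1)"
      by (simp add: diff_divide_distrib)
    then show ?thesis
      unfolding cos_divide_power[OF r_minus_cos_nonzero[OF assms]] by (simp add: algebra_simps)
  qed
  show ?thesis
    unfolding cos_quotient_integral_def[of r "m + 1" "Suc (Suc k)"] integrand
    by (intro integral_unique has_integral_diff has_integral_mult_right has_integral_cos_quotient_integral assms)
qed

lemma DERIV_sin_over_power:
  fixes r t :: real
  assumes "r - cos t \<noteq> 0"
  shows "((\<lambda>t. sin t / (r - cos t) ^ (j + 1)) has_real_derivative
    (real j + 1) * (r\<^sup>2 - 1) / (r - cos t) ^ (j + 2) - (2 * real j + 1) * r / (r - cos t) ^ (j + 1)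
    + real j / (r - cos t) ^ j) (at t)"
proof -
  define u where "u = r - cos t"
  have u: "u \<noteq> 0" using assms u_def by simp
  have num: "cos t * u - (real j + 1) * (sin t)\<^sup>2 = (real j + 1) * (r\<^sup>2 - 1) - (2 * real j + 1) * r * u + real j * u\<^sup>2"
    unfolding u_def sin_squared_eq by (simp add: algebra_simps power2_eq_square)
  have "(cos t * u ^ Suc j - sin t * (real (Suc j) * u ^ j * sin t)) / (u ^ Suc j)\<^sup>2
     = (cos t * u - (real j + 1) * (sin t)\<^sup>2) / u ^ (j + 2)"
    using u by (simp add: power2_eq_square power_add divide_simps) (simp add: algebra_simps)
  also have "\<dots> = (real j + 1) * (r\<^sup>2 - 1) / u ^ (j + 2) - (2 * real j + 1) * r / u ^ Suc j + real j / u ^ j"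
    unfolding num using u by (simp add: power_add divide_simps) (simp add: algebra_simps power2_eq_square)
  finally have deriv_eq: "(cos t * u ^ Suc j - sin t * (real (Suc j) * u ^ j * sin t)) / (u ^ Suc j)\<^sup>2
     = (real j + 1) * (r\<^sup>2 - 1) / u ^ (j + 2) - (2 * real j + 1) * r / u ^ Suc j + real j / u ^ j" .
  have "((\<lambda>t. sin t / (r - cos t) ^ Suc j) has_real_derivative
      (cos t * u ^ Suc j - sin t * (real (Suc j) * u ^ j * sin t)) / (u ^ Suc j)\<^sup>2) (at t)"
    unfolding u_def power2_eq_square using assms
    by (intro DERIV_divide DERIV_power_Suc derivative_eq_intros) (auto simp: algebra_simps)
  from this[unfolded deriv_eq, unfolded Suc_eq_plus1] show ?thesis
    unfolding u_def .
qed

lemma cos_quotient_integral_0_reduction: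
  assumes "\<bar>r\<bar> > 1"
  shows "(real j + 1) * (r\<^sup>2 - 1) * cos_quotient_integral r (j + 2) 0
    - (2 * real j + 1) * r * cos_quotient_integral r (j + 1) 0 + real j * cos_quotient_integral r j 0 = 0"
proof -
  let ?f = "\<lambda>t. (real j + 1) * (r\<^sup>2 - 1) / (r - cos t) ^ (j + 2) - (2 * real j + 1) * r / (r - cos t) ^ (j + 1)
      + real j / (r - cos t) ^ j"
  let ?F = "\<lambda>t. sin t / (r - cos t) ^ (j + 1)"
  have integrand: "?f t = (real j + 1) * (r\<^sup>2 - 1) * (cos (real 0 * t) / (r - cos t) ^ (j + 2))
      - (2 * real j + 1) * r * (cos (real 0 * t) / (r - cos t) ^ (j + 1)) + real j * (cos (real 0 * t) / (r - cos t) ^ j)" for t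
    by simp
  have "(?f has_integral (real j + 1) * (r\<^sup>2 - 1) * cos_quotient_integral r (j + 2) 0
      - (2 * real j + 1) * r * cos_quotient_integral r (j + 1) 0 + real j * cos_quotient_integral r j 0) {0..pi}"
    unfolding integrand
    by (intro has_integral_add has_integral_diff has_integral_mult_right has_integral_cos_quotient_integral assms)
  moreover have "(?f has_integral ?F pi - ?F 0) {0..pi}"
    by (rule has_integral_real_FTC[OF _ DERIV_sin_over_power[OF r_minus_cos_nonzero[OF assms]]]) simp
  then have "(?f has_integral 0) {0..pi}"
    by simp
  ultimately show ?thesis
    by (rule has_integral_unique)
qed

lemma sin_mult_sin_cubed_div:
  fixes r t :: real
  assumes "r - cos t \<noteq> 0"
  shows "sin ((real n + 1) * t) * sin t ^ 3 / (cos t - r) ^ 3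
    = 1 / 2 * ((r\<^sup>2 - 1) * (cos (real n * t) / (r - cos t) ^ 3 - cos (real (n + 2) * t) / (r - cos t) ^ 3)
        - 2 * r * (cos (real n * t) / (r - cos t) ^ 2 - cos (real (n + 2) * t) / (r - cos t) ^ 2)
        + (cos (real n * t) / (r - cos t) ^ 1 - cos (real (n + 2) * t) / (r - cos t) ^ 1))"
proof -
  define u where "u = r - cos t"
  have "u \<noteq> 0"
    using assms unfolding u_def .
  have product: "2 * sin ((real n + 1) * t) * sin t = cos (real n * t) - cos (real (n + 2) * t)"
    using cos_diff[of "(real n + 1) * t" t] cos_add[of "(real n + 1) * t" t]
    by (simp add: algebra_simps)
  have sin_squared: "(sin t)\<^sup>2 = (1 - r\<^sup>2) + 2 * r * u - u\<^sup>2"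
    unfolding u_def sin_squared_eq by (simp add: power2_eq_square algebra_simps)
  have "(cos t - r) ^ 3 = - (u ^ 3)"
    unfolding u_def by (simp add: power3_eq_cube algebra_simps)
  then have "sin ((real n + 1) * t) * sin t ^ 3 / (cos t - r) ^ 3
      = - ((2 * sin ((real n + 1) * t) * sin t) * (sin t)\<^sup>2) / (2 * u ^ 3)"
    by (simp add: power2_eq_square power3_eq_cube)
  also have "\<dots> = - ((cos (real n * t) - cos (real (n + 2) * t)) * ((1 - r\<^sup>2) + 2 * r * u - u\<^sup>2)) / (2 * u ^ 3)"
    unfolding product sin_squared ..
  also have "\<dots> = 1 / 2 * ((r\<^sup>2 - 1) * (cos (real n * t) / u ^ 3 - cos (real (n + 2) * t) / u ^ 3)
        - 2 * r * (cos (real n * t) / u ^ 2 - cos (real (n + 2) * t) / u ^ 2)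
        + (cos (real n * t) / u ^ 1 - cos (real (n + 2) * t) / u ^ 1))"
    using \<open>u \<noteq> 0\<close> by (simp add: field_simps power2_eq_square power3_eq_cube)
  finally show ?thesis
    unfolding u_def .
qed

lemma has_integral_sin_mult_sin_cubed_div:
  assumes "\<bar>r\<bar> > 1"
  shows "((\<lambda>t. sin ((real n + 1) * t) * sin t ^ 3 / (cos t - r) ^ 3) has_integral
    1 / 2 * ((r\<^sup>2 - 1) * (cos_quotient_integral r 3 n - cos_quotient_integral r 3 (n + 2))
      - 2 * r * (cos_quotient_integral r 2 n - cos_quotient_integral r 2 (n + 2))
      + (cos_quotient_integral r 1 n - cos_quotient_integral r 1 (n + 2)))) {0..pi}"
  unfolding sin_mult_sin_cubed_div[OF r_minus_cos_nonzero[OF assms]]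
  by (intro has_integral_mult_right has_integral_diff has_integral_add has_integral_cos_quotient_integral assms)

lemma has_integral_cos_substitution:
  fixes f :: "real \<Rightarrow> real"
  assumes "continuous_on {-1..1} f"
  shows "((\<lambda>t. sin t * f (cos t)) has_integral integral {-1..1} f) {0..pi}"
proof -
  have "((\<lambda>t. (- sin t) *\<^sub>R f (cos t)) has_integral
      integral {cos 0..cos pi} f - integral {cos pi..cos 0} f) {0..pi}"
    by (rule has_integral_substitution_general[of "{}" 0 pi cos "-1" 1 f])
      (auto intro!: continuous_intros derivative_eq_intros assms)
  then have "((\<lambda>t. - (sin t * f (cos t))) has_integral - integral {-1..1} f) {0..pi}"
    by simp
  then show ?thesis
    unfolding has_integral_neg_iff by simp
qed

locale small_root =
  fixes r p q :: real
  assumes sum_eq: "p + q = r"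
    and root: "p\<^sup>2 + 2 * p * q = 1"
    and abs_less_1: "\<bar>p\<bar> < 1"
begin

lemma root_r: "p\<^sup>2 + 1 = 2 * r * p"
  using root unfolding sum_eq[symmetric] by (simp add: power2_eq_square algebra_simps)

lemma p_nonzero: "p \<noteq> 0"
  using root by auto

lemma abs_gt_1: "\<bar>r\<bar> > 1"
proof -
  have "\<bar>p\<bar> * 1 < \<bar>p\<bar> * \<bar>r\<bar>"
  proof -
    have "0 < (\<bar>p\<bar> - 1)\<^sup>2" using abs_less_1 by simp
    also have "(\<bar>p\<bar> - 1)\<^sup>2 = 2 * (\<bar>p\<bar> * \<bar>r\<bar>) - 2 * \<bar>p\<bar>"
      using arg_cong[OF root_r, of abs] p_nonzero by (simp add: power2_eq_square abs_mult algebra_simps)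
    finally show ?thesis by simp
  qed
  then show ?thesis using p_nonzero by simp
qed

lemma q_squared: "q\<^sup>2 = r\<^sup>2 - 1"
  using root unfolding sum_eq[symmetric] by (simp add: power2_eq_square algebra_simps)

lemma q_eq: "q = r - p"
  using sum_eq by simp

lemma q_nonzero: "q \<noteq> 0"
proof -
  have "1 * 1 < \<bar>r\<bar> * \<bar>r\<bar>"
    using abs_gt_1 by (intro mult_strict_mono) auto
  then show ?thesis
    using q_squared by (auto simp: power2_eq_square)
qed

lemma DERIV_arctan_term:
  "((\<lambda>t. arctan (p * sin t / (1 - p * cos t))) has_real_derivative (cos t - p) / (2 * (r - cos t))) (at t)"
proof -
  define D where "D = 1 - p * cos t"
  have "\<bar>p * cos t\<bar> \<le> \<bar>p\<bar>"
    using abs_cos_le_one[of t] by (simp add: abs_mult mult_left_le)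
  then have "D \<noteq> 0" unfolding D_def using abs_less_1 by auto
  have sum_squares: "D\<^sup>2 + (p * sin t)\<^sup>2 = 2 * p * (r - cos t)"
    unfolding D_def using root_r sin_cos_squared_add[of t] by algebra
  have "((\<lambda>t. arctan (p * sin t / (1 - p * cos t))) has_real_derivative
     inverse (1 + (p * sin t / D)\<^sup>2) * ((p * cos t * D - p * sin t * (p * sin t)) / (D * D))) (at t)"
    unfolding D_def using \<open>D \<noteq> 0\<close>[unfolded D_def]
    by (intro DERIV_chain2[OF DERIV_arctan] DERIV_divide derivative_eq_intros) auto
  moreover have "inverse (1 + (p * sin t / D)\<^sup>2) * ((p * cos t * D - p * sin t * (p * sin t)) / (D * D))
      = (p * cos t * D - (p * sin t)\<^sup>2) / (D\<^sup>2 + (p * sin t)\<^sup>2)"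
  proof -
    have "D\<^sup>2 + (p * sin t)\<^sup>2 \<noteq> 0"
      unfolding sum_squares using p_nonzero r_minus_cos_nonzero[OF abs_gt_1] by simp
    moreover have "1 + (p * sin t / D)\<^sup>2 = (D\<^sup>2 + (p * sin t)\<^sup>2) / D\<^sup>2"
      using \<open>D \<noteq> 0\<close> by (simp add: field_simps)
    ultimately show ?thesis
      using \<open>D \<noteq> 0\<close> by (simp add: power2_eq_square)
  qed
  moreover have "p * cos t * D - (p * sin t)\<^sup>2 = p * (cos t - p)"
    unfolding D_def using sin_cos_squared_add[of t] by algebra
  ultimately show ?thesis
    unfolding sum_squares using p_nonzero by simp
qed

lemma power_recurrence: "p ^ Suc (Suc k) = 2 * r * p ^ Suc k - p ^ k"
proof -
  have "p ^ Suc (Suc k) = p ^ k * p\<^sup>2"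
    by (simp add: power2_eq_square)
  also have "\<dots> = p ^ k * (2 * r * p - 1)"
    using root_r by (simp add: eq_diff_eq)
  also have "\<dots> = 2 * r * p ^ Suc k - p ^ k"
    by (simp add: algebra_simps)
  finally show ?thesis .
qed

(* Unlike the one obtained from the substitution tan(t/2), this antiderivative of 1/(r - cos t)
   is smooth on the whole real line, because 1 - p cos t > 0. *)
lemma DERIV_arctan_antiderivative:
  "((\<lambda>t. (t + 2 * arctan (p * sin t / (1 - p * cos t))) / q) has_real_derivative 1 / (r - cos t)) (at t)"
proof -
  have "((\<lambda>t. (t + 2 * arctan (p * sin t / (1 - p * cos t))) / q) has_real_derivative
      (1 + 2 * ((cos t - p) / (2 * (r - cos t)))) / q) (at t)"
    by (intro DERIV_cdivide DERIV_add DERIV_ident DERIV_cmult DERIV_arctan_term)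
  moreover have "1 + 2 * ((cos t - p) / (2 * (r - cos t))) = q / (r - cos t)"
    using r_minus_cos_nonzero[OF abs_gt_1] unfolding q_eq by (simp add: field_simps)
  then have "(1 + 2 * ((cos t - p) / (2 * (r - cos t)))) / q = 1 / (r - cos t)"
    using q_nonzero by simp
  ultimately show ?thesis by simp
qed

lemma cos_quotient_integral_1_0: "q * cos_quotient_integral r 1 0 = pi"
proof -
  let ?F = "\<lambda>t. (t + 2 * arctan (p * sin t / (1 - p * cos t))) / q"
  have "((\<lambda>t. 1 / (r - cos t)) has_integral cos_quotient_integral r 1 0) {0..pi}"
    using has_integral_cos_quotient_integral[OF abs_gt_1, of 0 1] by simp
  moreover have "((\<lambda>t. 1 / (r - cos t)) has_integral ?F pi - ?F 0) {0..pi}"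
    by (rule has_integral_real_FTC[OF _ DERIV_arctan_antiderivative]) simp
  then have "((\<lambda>t. 1 / (r - cos t)) has_integral pi / q) {0..pi}"
    by simp
  ultimately have "cos_quotient_integral r 1 0 = pi / q"
    by (rule has_integral_unique)
  then show ?thesis
    using q_nonzero by simp
qed

(* The closed forms are multiplied by powers of q so that the inductions stay division-free. *)
lemma cos_quotient_integral_1: "q * cos_quotient_integral r 1 k = pi * p ^ k"
proof (induction k rule: induct_nat_012)
  case 0
  show ?case
    using cos_quotient_integral_1_0 by simp
next
  case 1
  have "cos_quotient_integral r 1 1 = r * cos_quotient_integral r 1 0 - pi"
    using cos_quotient_integral_at_1[OF abs_gt_1, of 0] cos_quotient_integral_0[of r 0] by simp
  then have "q * cos_quotient_integral r 1 1 = pi * p"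
    using cos_quotient_integral_1_0 sum_eq by algebra
  then show ?case
    by simp
next
  case (ge2 k)
  have "cos_quotient_integral r 1 (Suc (Suc k))
      = 2 * r * cos_quotient_integral r 1 (Suc k) - cos_quotient_integral r 1 k"
    using cos_quotient_integral_recurrence[OF abs_gt_1, of 0 k] cos_quotient_integral_0[of r "Suc k"] by simp
  then have "q * cos_quotient_integral r 1 (Suc (Suc k))
      = 2 * r * (q * cos_quotient_integral r 1 (Suc k)) - q * cos_quotient_integral r 1 k"
    by algebra
  also have "\<dots> = pi * (2 * r * p ^ Suc k - p ^ k)"
    using ge2 by (simp add: algebra_simps)
  finally show ?case
    by (simp only: power_recurrence)
qed

lemma cos_quotient_integral_2_0: "q ^ 3 * cos_quotient_integral r 2 0 = pi * r"
proof -
  have "q\<^sup>2 * cos_quotient_integral r 2 0 - r * cos_quotient_integral r 1 0 = 0"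
    using cos_quotient_integral_0_reduction[OF abs_gt_1, of 0] q_squared by (simp add: numeral_2_eq_2)
  then show ?thesis
    using cos_quotient_integral_1_0 by algebra
qed

lemma cos_quotient_integral_2: "q ^ 3 * cos_quotient_integral r 2 k = pi * p ^ k * (real k * q + r)"
proof (induction k rule: induct_nat_012)
  case 0
  show ?case
    using cos_quotient_integral_2_0 by simp
next
  case 1
  have "cos_quotient_integral r 2 1 = r * cos_quotient_integral r 2 0 - cos_quotient_integral r 1 0"
    using cos_quotient_integral_at_1[OF abs_gt_1, of 1] by (simp add: numeral_2_eq_2)
  then have "q ^ 3 * cos_quotient_integral r 2 1 = pi * p * (q + r)"
    using cos_quotient_integral_2_0 cos_quotient_integral_1_0 root sum_eq by algebra
  then show ?case
    by simp
next
  case (ge2 k)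
  have "cos_quotient_integral r 2 (Suc (Suc k))
      = 2 * r * cos_quotient_integral r 2 (Suc k) - 2 * cos_quotient_integral r 1 (Suc k)
        - cos_quotient_integral r 2 k"
    using cos_quotient_integral_recurrence[OF abs_gt_1, of 1 k] by (simp add: numeral_2_eq_2)
  then have "q ^ 3 * cos_quotient_integral r 2 (Suc (Suc k))
      = 2 * r * (q ^ 3 * cos_quotient_integral r 2 (Suc k)) - 2 * q\<^sup>2 * (q * cos_quotient_integral r 1 (Suc k))
        - q ^ 3 * cos_quotient_integral r 2 k"
    by algebra
  also have "\<dots> = pi * p ^ k * (2 * r * p * ((real k + 1) * q + r) - 2 * q\<^sup>2 * p - (real k * q + r))"
    unfolding ge2 cos_quotient_integral_1[of "Suc k"] by (simp add: algebra_simps)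
  also have "\<dots> = pi * p ^ k * (p\<^sup>2 * ((real k + 2) * q + r))"
  proof -
    have "2 * r * p * ((real k + 1) * q + r) - 2 * q\<^sup>2 * p - (real k * q + r) = p\<^sup>2 * ((real k + 2) * q + r)"
      using root sum_eq by algebra
    then show ?thesis
      by simp
  qed
  finally show ?case
    by (simp add: power2_eq_square algebra_simps)
qed

lemma cos_quotient_integral_3_0: "2 * q ^ 5 * cos_quotient_integral r 3 0 = pi * (3 * r\<^sup>2 - q\<^sup>2)"
proof -
  have "2 * q\<^sup>2 * cos_quotient_integral r 3 0 - 3 * r * cos_quotient_integral r 2 0 + cos_quotient_integral r 1 0 = 0"
    using cos_quotient_integral_0_reduction[OF abs_gt_1, of 1] q_squared by (simp add: numeral_2_eq_2 numeral_3_eq_3)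
  then show ?thesis
    using cos_quotient_integral_2_0 cos_quotient_integral_1_0 by algebra
qed

lemma cos_quotient_integral_3:
  "2 * q ^ 5 * cos_quotient_integral r 3 k = pi * p ^ k * ((real k ^ 2 - 1) * q\<^sup>2 + 3 * real k * r * q + 3 * r\<^sup>2)"
proof (induction k rule: induct_nat_012)
  case 0
  show ?case
    using cos_quotient_integral_3_0 by (simp add: algebra_simps)
next
  case 1
  have "cos_quotient_integral r 3 1 = r * cos_quotient_integral r 3 0 - cos_quotient_integral r 2 0"
    using cos_quotient_integral_at_1[OF abs_gt_1, of 2] by (simp add: numeral_2_eq_2 numeral_3_eq_3)
  then have "2 * q ^ 5 * cos_quotient_integral r 3 1 = pi * p * (3 * r * q + 3 * r\<^sup>2)"
    using cos_quotient_integral_3_0 cos_quotient_integral_2_0 root sum_eq by algebra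
  then show ?case
    by simp
next
  case (ge2 k)
  let ?P = "\<lambda>x. (x\<^sup>2 - 1) * q\<^sup>2 + 3 * x * r * q + 3 * r\<^sup>2"
  have "cos_quotient_integral r 3 (Suc (Suc k))
      = 2 * r * cos_quotient_integral r 3 (Suc k) - 2 * cos_quotient_integral r 2 (Suc k)
        - cos_quotient_integral r 3 k"
    using cos_quotient_integral_recurrence[OF abs_gt_1, of 2 k] by (simp add: numeral_2_eq_2 numeral_3_eq_3)
  then have "2 * q ^ 5 * cos_quotient_integral r 3 (Suc (Suc k))
      = 2 * r * (2 * q ^ 5 * cos_quotient_integral r 3 (Suc k)) - 4 * q\<^sup>2 * (q ^ 3 * cos_quotient_integral r 2 (Suc k))
        - 2 * q ^ 5 * cos_quotient_integral r 3 k"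
    by algebra
  also have "\<dots> = pi * p ^ k * (2 * r * p * ?P (real k + 1) - 4 * q\<^sup>2 * p * ((real k + 1) * q + r) - ?P (real k))"
    unfolding ge2 cos_quotient_integral_2[of "Suc k"] by (simp add: algebra_simps power2_eq_square)
  also have "\<dots> = pi * p ^ k * (p\<^sup>2 * ?P (real k + 2))"
  proof -
    have "2 * r * p * ?P (real k + 1) - 4 * q\<^sup>2 * p * ((real k + 1) * q + r) - ?P (real k) = p\<^sup>2 * ?P (real k + 2)"
      using root sum_eq by algebra
    then show ?thesis
      by simp
  qed
  finally show ?case
    by (simp add: power2_eq_square algebra_simps)
qed

lemma cos_quotient_integral_combination:
  "(r\<^sup>2 - 1) * (cos_quotient_integral r 3 n - cos_quotient_integral r 3 (n + 2))
      - 2 * r * (cos_quotient_integral r 2 n - cos_quotient_integral r 2 (n + 2))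
      + (cos_quotient_integral r 1 n - cos_quotient_integral r 1 (n + 2))
    = pi * ((real n ^ 2 + 2 * real n + 3) - 3 * (real n + 1) * r / q) * p ^ (n + 1)"
  (is "?V = _")
proof -
  define x where "x = p ^ n"
  have power_n2: "p ^ (n + 2) = p\<^sup>2 * x" and power_n1: "p ^ (n + 1) = p * x"
    unfolding x_def by (simp_all add: power_add power2_eq_square)
  let ?P3 = "\<lambda>k. (k ^ 2 - 1) * q\<^sup>2 + 3 * k * r * q + 3 * r\<^sup>2"
  have "2 * q ^ 5 * ?V = (r\<^sup>2 - 1) * (2 * q ^ 5 * cos_quotient_integral r 3 n - 2 * q ^ 5 * cos_quotient_integral r 3 (n + 2))
      - 4 * r * q\<^sup>2 * (q ^ 3 * cos_quotient_integral r 2 n - q ^ 3 * cos_quotient_integral r 2 (n + 2))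
      + 2 * q ^ 4 * (q * cos_quotient_integral r 1 n - q * cos_quotient_integral r 1 (n + 2))"
    by algebra
  also have "\<dots> = (r\<^sup>2 - 1) * (pi * x * ?P3 (real n) - pi * p\<^sup>2 * x * ?P3 (real n + 2))
      - 4 * r * q\<^sup>2 * (pi * x * (real n * q + r) - pi * p\<^sup>2 * x * ((real n + 2) * q + r))
      + 2 * q ^ 4 * (pi * x - pi * p\<^sup>2 * x)"
    unfolding cos_quotient_integral_1 cos_quotient_integral_2 cos_quotient_integral_3 power_n2 of_nat_add x_def
    by (simp add: mult_ac)
  also have "\<dots> = pi * x * (q\<^sup>2 * (?P3 (real n) - p\<^sup>2 * ?P3 (real n + 2))
      - 4 * r * q\<^sup>2 * (real n * q + r - p\<^sup>2 * ((real n + 2) * q + r)) + 4 * p * q ^ 5)"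
    using q_squared root sum_eq by algebra
  also have "\<dots> = 2 * pi * q ^ 4 * ((real n ^ 2 + 2 * real n + 3) * q - 3 * (real n + 1) * r) * p * x"
    using root sum_eq by algebra
  finally have "2 * q ^ 5 * ?V = 2 * pi * q ^ 4 * ((real n ^ 2 + 2 * real n + 3) * q - 3 * (real n + 1) * r) * p * x" .
  also have "\<dots> = 2 * q ^ 5 * (pi * ((real n ^ 2 + 2 * real n + 3) - 3 * (real n + 1) * r / q) * p ^ (n + 1))"
    unfolding power_n1 using q_nonzero by (simp add: field_simps) algebra
  finally show ?thesis
    using q_nonzero by simp
qed

lemma has_integral_chebyshevU_weighted:
  "((\<lambda>s. chebyshevU n s * ((1 - s\<^sup>2) * sqrt (1 - s\<^sup>2)) / (s - r) ^ 3) has_integral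
    pi / 2 * ((real n ^ 2 + 2 * real n + 3) - 3 * (real n + 1) * r / q) * p ^ (n + 1)) {-1..1}"
proof -
  define G where "G s = chebyshevU n s * ((1 - s\<^sup>2) * sqrt (1 - s\<^sup>2)) / (s - r) ^ 3" for s
  have "s - r \<noteq> 0" if "s \<in> {-1..1}" for s
    using that abs_gt_1 by auto
  then have G_cont: "continuous_on {-1..1} G"
    unfolding G_def by (intro continuous_intros continuous_on_chebyshevU) auto
  then have G: "(G has_integral integral {-1..1} G) {-1..1}"
    by (intro integrable_integral integrable_continuous_interval)
  have integrand: "sin t * G (cos t) = sin ((real n + 1) * t) * sin t ^ 3 / (cos t - r) ^ 3" if "t \<in> {0..pi}" for t
  proof -
    have "1 - (cos t)\<^sup>2 = (sin t)\<^sup>2"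
      by (simp add: sin_squared_eq)
    moreover have "sqrt ((sin t)\<^sup>2) = sin t"
      using that by (simp add: sin_ge_zero)
    ultimately have "sin t * G (cos t) = (chebyshevU n (cos t) * sin t) * sin t ^ 3 / (cos t - r) ^ 3"
      unfolding G_def by (simp add: power2_eq_square power3_eq_cube mult_ac)
    then show ?thesis
      unfolding chebyshevU_cos .
  qed
  have "((\<lambda>t. sin ((real n + 1) * t) * sin t ^ 3 / (cos t - r) ^ 3) has_integral integral {-1..1} G) {0..pi}"
    using has_integral_eq[OF integrand has_integral_cos_substitution[OF G_cont]] by blast
  then have "integral {-1..1} G = 1 / 2 * (pi * ((real n ^ 2 + 2 * real n + 3) - 3 * (real n + 1) * r / q) * p ^ (n + 1))"
    using has_integral_sin_mult_sin_cubed_div[OF abs_gt_1, of n, unfolded cos_quotient_integral_combination]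
    by (rule has_integral_unique)
  with G show ?thesis
    unfolding G_def by (simp add: mult.assoc)
qed

end

lemma small_root_of_abs_gt_1:
  fixes r :: real
  assumes "\<bar>r\<bar> > 1"
  shows "small_root r (r - \<bar>r\<bar> / r * sqrt (r\<^sup>2 - 1)) (\<bar>r\<bar> / r * sqrt (r\<^sup>2 - 1))"
proof -
  define q where "q = \<bar>r\<bar> / r * sqrt (r\<^sup>2 - 1)"
  have "1 * 1 < \<bar>r\<bar> * \<bar>r\<bar>"
    using assms by (intro mult_strict_mono) auto
  then have r_squared: "r\<^sup>2 > 1"
    by (simp add: power2_eq_square)
  have "q\<^sup>2 = r\<^sup>2 - 1"
    unfolding q_def using r_squared assms by (auto simp: power_mult_distrib power_divide)
  then have root: "(r - q)\<^sup>2 + 2 * (r - q) * q = 1"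
    by (simp add: power2_eq_square algebra_simps)
  have "\<bar>r + q\<bar> > 1"
  proof (cases "r > 0")
    case True
    then have "q = sqrt (r\<^sup>2 - 1)"
      unfolding q_def by simp
    moreover have "sqrt (r\<^sup>2 - 1) \<ge> 0" "r > 1"
      using r_squared True assms by simp_all
    ultimately have "r + q > 1"
      by linarith
    then show ?thesis
      by simp
  next
    case False
    then have "q = - sqrt (r\<^sup>2 - 1)"
      using assms unfolding q_def by auto
    moreover have "sqrt (r\<^sup>2 - 1) \<ge> 0" "r < -1"
      using r_squared False assms by simp_all
    ultimately have "r + q < -1"
      by linarith
    then show ?thesis
      by simp
  qed
  moreover have "\<bar>r - q\<bar> * \<bar>r + q\<bar> = 1"
    using root unfolding abs_mult[symmetric] by (simp add: power2_eq_square algebra_simps)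
  ultimately have "\<bar>r - q\<bar> = 1 / \<bar>r + q\<bar>"
    by (auto simp: eq_divide_eq)
  with \<open>\<bar>r + q\<bar> > 1\<close> have "\<bar>r - q\<bar> < 1"
    by simp
  with root show ?thesis
    unfolding q_def[symmetric] by unfold_locales simp_all
qed

lemma mult_divide_signed_sqrt:
  fixes a r :: real
  assumes "\<bar>r\<bar> > 1"
  shows "a * r / (\<bar>r\<bar> / r * sqrt (r\<^sup>2 - 1)) = a * \<bar>r\<bar> / sqrt (r\<^sup>2 - 1)"
proof -
  have "r \<noteq> 0"
    using assms by auto
  then have "r / (\<bar>r\<bar> / r * sqrt (r\<^sup>2 - 1)) = (\<bar>r\<bar> * \<bar>r\<bar>) / (\<bar>r\<bar> * sqrt (r\<^sup>2 - 1))"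
    by (simp add: divide_divide_eq_right)
  also have "\<dots> = \<bar>r\<bar> / sqrt (r\<^sup>2 - 1)"
    using \<open>r \<noteq> 0\<close> by (intro nonzero_mult_divide_mult_cancel_left) simp
  finally show ?thesis
    by (simp only: times_divide_eq_right[symmetric])
qed

lemma powr_three_halves:
  fixes x :: real
  assumes "x \<ge> 0"
  shows "x powr (3/2) = x * sqrt x"
proof -
  have "x powr (3/2) = x powr (1 + 1/2)"
    by simp
  also have "\<dots> = x powr 1 * x powr (1/2)"
    by (rule powr_add)
  also have "\<dots> = x * sqrt x"
    using assms by (cases "x = 0") (simp_all add: powr_half_sqrt)
  finally show ?thesis .
qed

theorem mainTheorem12:
  fixes n :: nat and r :: real
  assumes "\<bar>r\<bar> > 1"
  shows "((\<lambda>s. chebU n s * (1 - s\<^sup>2) powr (3/2) / (s - r) ^ 3) has_integral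
           (pi / 2) * ((real n ^ 2 + 2 * real n + 3)
                       - 3 * (real n + 1) * \<bar>r\<bar> / sqrt (r\<^sup>2 - 1))
           * (r - \<bar>r\<bar> / r * sqrt (r\<^sup>2 - 1)) ^ (n + 1)) {-1..1}"
proof -
  interpret small_root r "r - \<bar>r\<bar> / r * sqrt (r\<^sup>2 - 1)" "\<bar>r\<bar> / r * sqrt (r\<^sup>2 - 1)"
    using assms by (rule small_root_of_abs_gt_1)
  have weighted: "((\<lambda>s. chebyshevU n s * ((1 - s\<^sup>2) * sqrt (1 - s\<^sup>2)) / (s - r) ^ 3) has_integral
           (pi / 2) * ((real n ^ 2 + 2 * real n + 3) - 3 * (real n + 1) * \<bar>r\<bar> / sqrt (r\<^sup>2 - 1))
           * (r - \<bar>r\<bar> / r * sqrt (r\<^sup>2 - 1)) ^ (n + 1)) {-1..1}"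
    using has_integral_chebyshevU_weighted[of n] unfolding mult_divide_signed_sqrt[OF assms] .
  show ?thesis
  proof (rule has_integral_spike_finite[where S = "{-1, 1}", OF _ _ weighted])
    fix s :: real
    assume "s \<in> {-1..1} - {-1, 1}"
    then have "-1 < s" "s < 1" "1 - s\<^sup>2 \<ge> 0"
      by (auto simp: abs_square_le_1 abs_le_iff)
    then show "chebU n s * (1 - s\<^sup>2) powr (3/2) / (s - r) ^ 3
        = chebyshevU n s * ((1 - s\<^sup>2) * sqrt (1 - s\<^sup>2)) / (s - r) ^ 3"
      by (simp add: chebU_eq_chebyshevU powr_three_halves)
  qed simp
qed

end
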